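(* Let $X\subset\mathbb{R}$ be either a finite set or a compact interval $[\underline x,\bar x]$, let $\Delta(X)$ be the set of Borel probability measures on $X$ with the weak$^*$ topology, and let $\Theta=[\underline\theta,\bar\theta]$. Let $u:\mathbb{R}\to\mathbb{R}$ be strictly increasing, continuous and weakly concave. Let $C:\Theta\times\Delta(X)\to\mathbb{R}$ be bounded, with $C(\theta,\cdot)$ weak$^*$-continuous and convex for every $\theta$, and satisfying: (i) for every $\theta$, if $\mu'$ first-order stochastically dominates $\mu$ then $C(\theta,\mu')\ge C(\theta,\mu)$; (ii) for every $(\theta,\mu)$ there is a continuous $c_\mu(\theta,\cdot):X\to\mathbb{R}$ with $\lim_{\varepsilon\searrow0}\big(C(\theta,(1-\varepsilon)\mu+\varepsilon\mu')-C(\theta,\mu)\big)/\varepsilon=\int_X c_\mu(\theta,x)\,[\mu'-\mu](\mathrm{d}x)$ for all $\mu'\in\Delta(X)$; (iii) for every $\mu$, $C(\cdot,\mu)$ is strictly decreasing and continuously differentiable, and for every $\theta$, $\sup_{\mu\in\Delta(X)}|\partial C(\theta,\mu)/\partial\theta|<\infty$. For a measurable wage $w:X\to\mathbb{R}$ bounded above, define $U(\theta,w,\mu)=\int_X u(w(x))\,\mu(\mathrm{d}x)-C(\theta,\mu)$. Let $\{w_\theta,\mu_\theta\}_{\theta\in\Theta}$ be a mechanism (each $w_\theta:X\to\mathbb{R}$ measurable and bounded above, each $\mu_\theta\in\Delta(X)$) that is incentive compatible, i.e. $U(\theta,w_\theta,\mu_\theta)\ge U(\theta,w_{\hat\theta},\mu')$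 for all $\theta,\hat\theta\in\Theta$ and all $\mu'\in\Delta(X)$. Then there exist wages $\{\bar w_\theta\}_{\theta\in\Theta}$ such that for all $\theta$ the function $\bar w_\theta:X\to\mathbb{R}$ is non-decreasing and right-continuous, the mechanism $\{\bar w_\theta,\mu_\theta\}_{\theta\in\Theta}$ is incentive compatible, and $\mu_\theta(\{x:\bar w_\theta(x)\neq w_\theta(x)\})=0$ for all $\theta\in\Theta$.
   Context: Interpretation: an agent of private type $\theta$ reports a type $\hat\theta$, receives contract $w_{\hat\theta}$, and then chooses an output distribution $\mu\in\Delta(X)$ at cost $C(\theta,\mu)$; output $x\sim\mu$ is realized and the agent is paid $w_{\hat\theta}(x)$. Incentive compatibility requires that truthful reporting together with choosing $\mu_\theta$ is optimal against all joint deviations in report and action. *)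

theory Defs
  imports "HOL-Probability.Probability"
begin

text \<open>Delta X: Borel probability measures on the real line concentrated on X
  (identified with Borel probability measures on X).\<close>
definition Delta :: "real set \<Rightarrow> real measure set" where
  "Delta X = {M. sets M = sets (borel :: real measure) \<and> prob_space M \<and> emeasure M X = 1}"

definition mix :: "real \<Rightarrow> real measure \<Rightarrow> real measure \<Rightarrow> real measure" where
  "mix t M N = measure_of UNIV (sets (borel :: real measure))
      (\<lambda>A. ennreal (1 - t) * emeasure M A + ennreal t * emeasure N A)"

text \<open>Weak* convergence of a sequence in Delta X (X compact, so every continuous
  function on X is bounded).\<close>
definition weak_conv_on :: "real set \<Rightarrow> (nat \<Rightarrow> real measure) \<Rightarrow> real measure \<Rightarrow> bool" where
  "weak_conv_on X Ms M \<longleftrightarrow>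
     (\<forall>f :: real \<Rightarrow> real. continuous_on X f \<longrightarrow>
        (\<lambda>n. (LINT x:X|Ms n. f x)) \<longlonglongrightarrow> (LINT x:X|M. f x))"

definition fosd :: "real measure \<Rightarrow> real measure \<Rightarrow> bool" where
  "fosd N M \<longleftrightarrow> (\<forall>t. measure N {..t} \<le> measure M {..t})"

text \<open>Integral of a function bounded above, with value -\<infinity> when not integrable.\<close>
definition ext_int :: "real set \<Rightarrow> real measure \<Rightarrow> (real \<Rightarrow> real) \<Rightarrow> ereal" where
  "ext_int X M f = (if set_integrable M X f then ereal (LINT x:X|M. f x) else - \<infinity>)"

definition Util :: "real set \<Rightarrow> (real \<Rightarrow> real) \<Rightarrow> (real \<Rightarrow> real measure \<Rightarrow> real)
    \<Rightarrow> real \<Rightarrow> (real \<Rightarrow> real) \<Rightarrow> real measure \<Rightarrow> ereal" where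
  "Util X u C \<theta> w M = ext_int X M (\<lambda>x. u (w x)) - ereal (C \<theta> M)"

definition mechanism :: "real set \<Rightarrow> real set \<Rightarrow> (real \<Rightarrow> real \<Rightarrow> real) \<Rightarrow> (real \<Rightarrow> real measure) \<Rightarrow> bool" where
  "mechanism X \<Theta> w \<mu> \<longleftrightarrow>
     (\<forall>\<theta>\<in>\<Theta>. w \<theta> \<in> borel_measurable (restrict_space borel X)
        \<and> (\<exists>B. \<forall>x\<in>X. w \<theta> x \<le> B) \<and> \<mu> \<theta> \<in> Delta X)"

definition incentive_compatible :: "real set \<Rightarrow> (real \<Rightarrow> real) \<Rightarrow> (real \<Rightarrow> real measure \<Rightarrow> real)
    \<Rightarrow> real set \<Rightarrow> (real \<Rightarrow> real \<Rightarrow> real) \<Rightarrow> (real \<Rightarrow> real measure) \<Rightarrow> bool" where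
  "incentive_compatible X u C \<Theta> w \<mu> \<longleftrightarrow>
     mechanism X \<Theta> w \<mu> \<and>
     (\<forall>\<theta>\<in>\<Theta>. \<forall>\<theta>'\<in>\<Theta>. \<forall>M'\<in>Delta X.
        Util X u C \<theta> (w \<theta>') M' \<le> Util X u C \<theta> (w \<theta>) (\<mu> \<theta>))"

end

theory Submission
  imports Defs
begin

(* Fix a type theta and write v = u o w_theta. Testing the optimality of mu_theta against the
   mixtures (1 - e) mu_theta + e delta_y and passing to the limit e -> 0 with the Gateaux
   derivative c of the cost gives v <= c + K on X with equality mu_theta-almost everywhere;
   first-order stochastic monotonicity of the cost makes c non-decreasing.

   Replace w_theta by its least non-decreasing right-continuous majorant.  Since v lies below
   the continuous non-decreasing c + K and touches it almost everywhere, the majorant equals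
   w_theta almost everywhere, so truthful payoffs do not change.  A deviation to an action N
   under the new wage is matched by deviations under the old one: push N forward along maps S_n
   that attain the majorant up to 1/(n+1) and are dominated pointwise by maps R_n converging to
   the identity.  Stochastic dominance bounds the cost of S_n#N by that of R_n#N, which tends
   to the cost of N by weak* continuity. *)

section \<open>Mixtures and pushforwards of Borel probability measures\<close>

lemma emeasure_mix:
  assumes t: "0 \<le> t" "t \<le> 1" and M: "sets M = sets borel" and N: "sets N = sets borel"
    and A: "A \<in> sets borel"
  shows "emeasure (mix t M N) A = ennreal (1 - t) * emeasure M A + ennreal t * emeasure N A"
  unfolding mix_def
proof (rule emeasure_measure_of_sigma)
  show "sigma_algebra UNIV (sets borel)"
    using sets.sigma_algebra_axioms[of borel] by simp
  show "positive (sets borel) (\<lambda>A. ennreal (1 - t) * emeasure M A + ennreal t * emeasure N A)"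
    by (simp add: positive_def)
  show "countably_additive (sets borel) (\<lambda>A. ennreal (1 - t) * emeasure M A + ennreal t * emeasure N A)"
  proof (rule countably_additiveI)
    fix B :: "nat \<Rightarrow> real set" assume B: "range B \<subseteq> sets borel" "disjoint_family B"
    have "(\<Sum>i. ennreal (1 - t) * emeasure M (B i) + ennreal t * emeasure N (B i))
        = (\<Sum>i. ennreal (1 - t) * emeasure M (B i)) + (\<Sum>i. ennreal t * emeasure N (B i))"
      by (rule suminf_add[symmetric]) auto
    also have "\<dots> = ennreal (1 - t) * (\<Sum>i. emeasure M (B i)) + ennreal t * (\<Sum>i. emeasure N (B i))"
      by (simp add: ennreal_suminf_cmult)
    also have "\<dots> = ennreal (1 - t) * emeasure M (\<Union>i. B i) + ennreal t * emeasure N (\<Union>i. B i)"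
      using B M N by (simp add: suminf_emeasure)
    finally show "(\<Sum>i. ennreal (1 - t) * emeasure M (B i) + ennreal t * emeasure N (B i))
        = ennreal (1 - t) * emeasure M (\<Union>i. B i) + ennreal t * emeasure N (\<Union>i. B i)" .
  qed
qed (rule A)

lemma sets_mix [simp]: "sets (mix t M N) = sets borel"
  unfolding mix_def
  by (metis sets.sigma_sets_eq sets_measure_of space_borel sets.space_closed)

lemma space_mix [simp]: "space (mix t M N) = UNIV"
  using sets_eq_imp_space_eq[OF sets_mix] by simp

lemma borel_measurable_sets_eq:
  assumes "sets N = sets borel" "f \<in> borel_measurable borel"
  shows "f \<in> borel_measurable N"
  unfolding measurable_cong_sets[OF assms(1) refl] by (rule assms(2))

lemma nn_integral_mix:
  assumes t: "0 \<le> t" "t \<le> 1" and M: "sets M = sets borel" and N: "sets N = sets borel"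
    and f: "f \<in> borel_measurable borel"
  shows "(\<integral>\<^sup>+x. f x \<partial>mix t M N) = ennreal (1 - t) * (\<integral>\<^sup>+x. f x \<partial>M) + ennreal t * (\<integral>\<^sup>+x. f x \<partial>N)"
  using f
proof (induction rule: borel_measurable_induct)
  case (cong f g)
  then show ?case
    using sets_eq_imp_space_eq[OF M] sets_eq_imp_space_eq[OF N] by simp
next
  case (set A)
  then show ?case using emeasure_mix[OF t M N, of A] M N by simp
next
  case (mult v c)
  then show ?case
    using M N by (simp add: measurable_def nn_integral_cmult algebra_simps)
next
  case (add v v')
  then show ?case
    using M N by (simp add: measurable_def nn_integral_add algebra_simps distrib_left)
next
  case (seq U)
  have m: "\<And>i. U i \<in> borel_measurable (mix t M N)" "\<And>i. U i \<in> borel_measurable M"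
    "\<And>i. U i \<in> borel_measurable N"
    using seq M N by (auto simp: measurable_def)
  have eq: "\<And>K. (\<integral>\<^sup>+x. (SUP i. U i) x \<partial>K) = (\<integral>\<^sup>+x. (SUP i. U i x) \<partial>K)"
    by (simp add: image_comp)
  have "(\<integral>\<^sup>+x. (SUP i. U i) x \<partial>mix t M N)
      = (SUP i. ennreal (1 - t) * integral\<^sup>N M (U i) + ennreal t * integral\<^sup>N N (U i))"
    unfolding eq using seq by (simp add: nn_integral_monotone_convergence_SUP[OF seq(3) m(1)])
  also have "\<dots> = (SUP i. ennreal (1 - t) * integral\<^sup>N M (U i)) + (SUP i. ennreal t * integral\<^sup>N N (U i))"
    using seq m by (intro ennreal_SUP_add)
      (auto intro!: mult_left_mono nn_integral_mono simp: incseq_def le_fun_def)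
  also have "\<dots> = ennreal (1 - t) * (\<integral>\<^sup>+x. (SUP i. U i) x \<partial>M) + ennreal t * (\<integral>\<^sup>+x. (SUP i. U i) x \<partial>N)"
    unfolding eq
    by (simp add: SUP_mult_left_ennreal nn_integral_monotone_convergence_SUP[OF seq(3) m(2)]
        nn_integral_monotone_convergence_SUP[OF seq(3) m(3)])
  finally show ?case .
qed

lemma DeltaD:
  assumes "M \<in> Delta X"
  shows "sets M = sets borel" "prob_space M" "emeasure M X = 1" "space M = UNIV"
  using assms sets_eq_imp_space_eq[of M borel] by (auto simp: Delta_def)

lemma Delta_nonempty_set:
  assumes "M \<in> Delta X"
  shows "X \<noteq> {}"
  using DeltaD(3)[OF assms] by auto

lemma return_in_Delta:
  assumes "x \<in> X" "X \<in> sets borel"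
  shows "return borel x \<in> Delta X"
  using assms by (auto simp: Delta_def prob_space_return)

lemma measure_mix:
  assumes t: "0 \<le> t" "t \<le> 1" and M: "prob_space M" "sets M = sets borel"
    and N: "prob_space N" "sets N = sets borel" and A: "A \<in> sets borel"
  shows "measure (mix t M N) A = (1 - t) * measure M A + t * measure N A"
proof -
  interpret M: prob_space M by fact
  interpret N: prob_space N by fact
  have "measure (mix t M N) A = enn2real (ennreal (1 - t) * emeasure M A + ennreal t * emeasure N A)"
    unfolding measure_def using emeasure_mix[OF t M(2) N(2) A] by simp
  also have "\<dots> = (1 - t) * measure M A + t * measure N A"
    using M N t
    by (subst enn2real_plus) (auto simp: enn2real_mult M.emeasure_eq_measure N.emeasure_eq_measure
        ennreal_mult_less_top ennreal_mult[symmetric] simp del: ennreal_mult')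
  finally show ?thesis .
qed

lemma mix_in_Delta:
  assumes t: "0 \<le> t" "t \<le> 1" and M: "M \<in> Delta X" and N: "N \<in> Delta X"
    and X: "X \<in> sets borel"
  shows "mix t M N \<in> Delta X"
proof -
  have e: "emeasure (mix t M N) A = ennreal (1 - t) * emeasure M A + ennreal t * emeasure N A"
    if "A \<in> sets borel" for A
    using emeasure_mix[OF t DeltaD(1)[OF M] DeltaD(1)[OF N] that] .
  have one: "ennreal (1 - t) + ennreal t = 1"
    using t by (simp flip: ennreal_plus)
  have "emeasure M UNIV = 1" "emeasure N UNIV = 1"
    using DeltaD[OF M] DeltaD[OF N] prob_space.emeasure_space_1 by metis+
  then have "prob_space (mix t M N)"
    by (intro prob_spaceI) (simp add: e one)
  moreover have "emeasure (mix t M N) X = 1"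
    using X DeltaD(3)[OF M] DeltaD(3)[OF N] by (simp add: e one)
  ultimately show ?thesis by (simp add: Delta_def)
qed

lemma distr_in_Delta:
  assumes M: "M \<in> Delta X" and X: "X \<in> sets borel"
    and T: "T \<in> borel_measurable borel" and TX: "\<And>x. x \<in> X \<Longrightarrow> T x \<in> X"
  shows "distr M borel T \<in> Delta X"
proof -
  interpret prob_space M using DeltaD[OF M] by simp
  have T': "T \<in> measurable M borel" using borel_measurable_sets_eq[OF DeltaD(1)[OF M] T] .
  have "emeasure M X \<le> emeasure M (T -` X \<inter> space M)"
    using TX X DeltaD[OF M] measurable_sets[OF T X] by (intro emeasure_mono) auto
  then have "emeasure (distr M borel T) X = 1"
    using T' X DeltaD(3)[OF M] emeasure_le_1[of "T -` X \<inter> space M"]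
    by (simp add: emeasure_distr)
  moreover have "prob_space (distr M borel T)" using T' by (rule prob_space_distr)
  ultimately show ?thesis by (simp add: Delta_def)
qed

lemma fosd_distr_mono:
  assumes M: "M \<in> Delta X"
    and S: "S \<in> borel_measurable borel" and R: "R \<in> borel_measurable borel"
    and le: "\<And>x. S x \<le> R x"
  shows "fosd (distr M borel R) (distr M borel S)"
  unfolding fosd_def
proof
  fix t :: real
  interpret prob_space M using DeltaD[OF M] by simp
  have S': "S \<in> measurable M borel" and R': "R \<in> measurable M borel"
    using borel_measurable_sets_eq[OF DeltaD(1)[OF M]] S R by auto
  have "R -` {..t} \<inter> space M \<subseteq> S -` {..t} \<inter> space M"
    using le by (auto intro: order_trans)
  then show "measure (distr M borel R) {..t} \<le> measure (distr M borel S) {..t}"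
    using S' R' by (simp add: measure_distr finite_measure_mono measurable_sets)
qed

lemma fosd_mix_return:
  assumes t: "0 \<le> t" "t \<le> 1" and M: "M \<in> Delta X" and xy: "x \<le> y"
  shows "fosd (mix t M (return borel y)) (mix t M (return borel x))"
  unfolding fosd_def
proof
  fix s :: real
  have "indicator {..s} y \<le> (indicator {..s} x :: real)" using xy by (auto simp: indicator_def)
  then show "measure (mix t M (return borel y)) {..s} \<le> measure (mix t M (return borel x)) {..s}"
    using t DeltaD[OF M]
    by (simp add: measure_mix prob_space_return measure_return mult_left_mono)
qed

lemma has_bochner_integral_mix:
  fixes f :: "real \<Rightarrow> real"
  assumes t: "0 \<le> t" "t \<le> 1" and M: "sets M = sets borel" and N: "sets N = sets borel"
    and fM: "integrable M f" and fN: "integrable N f"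
  shows "has_bochner_integral (mix t M N) f ((1 - t) * integral\<^sup>L M f + t * integral\<^sup>L N f)"
proof -
  have fb: "f \<in> borel_measurable borel"
    using borel_measurable_integrable[OF fM] measurable_cong_sets[OF M refl, of borel] by metis
  have fin: "(\<integral>\<^sup>+x. ennreal (g x) \<partial>K) < \<infinity>"
    if K: "integrable K f" and g: "g = f \<or> g = (\<lambda>x. - f x)" for K g
  proof -
    have "(\<integral>\<^sup>+x. ennreal (g x) \<partial>K) \<le> (\<integral>\<^sup>+x. ennreal (norm (f x)) \<partial>K)"
      using g by (intro nn_integral_mono) (auto simp: ennreal_leI)
    then show ?thesis using K by (simp add: integrable_iff_bounded le_less_trans)
  qed
  have "(\<integral>\<^sup>+x. ennreal (norm (f x)) \<partial>mix t M N) < \<infinity>"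
    using fM fN fb by (simp add: nn_integral_mix[OF t M N] ennreal_mult_less_top integrable_iff_bounded)
  then have int: "integrable (mix t M N) f"
    using borel_measurable_sets_eq[OF sets_mix fb] by (simp add: integrable_iff_bounded)
  have "integral\<^sup>L (mix t M N) f = (1 - t) * integral\<^sup>L M f + t * integral\<^sup>L N f"
    using t fin[OF fM] fin[OF fN] fb
    by (simp add: real_lebesgue_integral_def[OF int] real_lebesgue_integral_def[OF fM]
        real_lebesgue_integral_def[OF fN] nn_integral_mix[OF t M N] enn2real_plus ennreal_mult_less_top
        enn2real_mult algebra_simps)
  with int show ?thesis by (simp add: has_bochner_integral_iff)
qed

lemma has_bochner_integral_return:
  fixes g :: "real \<Rightarrow> real"
  assumes g: "g \<in> borel_measurable borel"
  shows "has_bochner_integral (return borel y) g (g y)"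
proof -
  interpret prob_space "return borel y" by (rule prob_space_return) simp
  have "AE x in return borel y. norm (g x) \<le> norm (g y)"
    using g by (subst AE_return) auto
  then have "integrable (return borel y) g"
    using g by (intro integrable_const_bound) auto
  then show ?thesis
    using g by (simp add: has_bochner_integral_iff integral_return)
qed

section \<open>The first-order condition\<close>

lemma set_integral_return:
  fixes f :: "real \<Rightarrow> real"
  assumes "(\<lambda>x. indicator X x * f x) \<in> borel_measurable borel" and "y \<in> X"
  shows "set_integrable (return borel y) X f" and "(LINT x:X|return borel y. f x) = f y"
  using has_bochner_integral_return[OF assms(1), of y] assms(2)
  by (simp_all add: has_bochner_integral_iff set_integrable_def set_lebesgue_integral_def)

lemma ext_int_return:
  assumes "(\<lambda>x. indicator X x * f x) \<in> borel_measurable borel" and "y \<in> X"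
  shows "ext_int X (return borel y) f = ereal (f y)"
  using set_integral_return[OF assms] by (simp add: ext_int_def)

lemma continuous_on_compact_bounded:
  fixes c :: "real \<Rightarrow> real"
  assumes "compact X" "continuous_on X c"
  shows "\<exists>B. \<forall>x\<in>X. \<bar>c x\<bar> \<le> B"
  using compact_imp_bounded[OF compact_continuous_image[OF assms(2,1)]]
  by (meson bounded_real image_eqI)

lemma set_integrable_continuous_on_compact:
  fixes c :: "real \<Rightarrow> real"
  assumes X: "compact X" and M: "M \<in> Delta X" and c: "continuous_on X c"
  shows "set_integrable M X c"
proof -
  interpret prob_space M using DeltaD[OF M] by simp
  obtain B where B: "\<And>x. x \<in> X \<Longrightarrow> \<bar>c x\<bar> \<le> B" using continuous_on_compact_bounded[OF X c] by blast
  have "(\<lambda>x. indicator X x * c x) \<in> borel_measurable borel"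
    using borel_measurable_continuous_on_indicator[OF compact_imp_closed[OF X, THEN borel_closed] c]
    by simp
  moreover have "0 \<le> B" using B Delta_nonempty_set[OF M] by force
  ultimately show ?thesis
    unfolding set_integrable_def using B DeltaD(1)[OF M]
    by (intro integrable_const_bound[where B=B] AE_I2)
      (auto simp: indicator_def intro: borel_measurable_sets_eq)
qed

lemma mono_on_marginal_cost:
  fixes c :: "real \<Rightarrow> real" and Cf :: "real measure \<Rightarrow> real"
  assumes X: "X \<in> sets borel" and mu: "\<mu> \<in> Delta X" and c: "continuous_on X c"
    and gat: "\<And>N. N \<in> Delta X \<Longrightarrow> ((\<lambda>\<epsilon>. (Cf (mix \<epsilon> \<mu> N) - Cf \<mu>) / \<epsilon>)
                  \<longlongrightarrow> (LINT x:X|N. c x) - (LINT x:X|\<mu>. c x)) (at_right 0)"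
    and fosd_mono: "\<And>M N. M \<in> Delta X \<Longrightarrow> N \<in> Delta X \<Longrightarrow> fosd N M \<Longrightarrow> Cf M \<le> Cf N"
  shows "mono_on X c"
proof (rule mono_onI)
  fix x y assume x: "x \<in> X" and y: "y \<in> X" and xy: "x \<le> y"
  have cm: "(\<lambda>x. indicator X x * c x) \<in> borel_measurable borel"
    using borel_measurable_continuous_on_indicator[OF X c] by simp
  have "(LINT z:X|return borel x. c z) - (LINT z:X|\<mu>. c z)
      \<le> (LINT z:X|return borel y. c z) - (LINT z:X|\<mu>. c z)"
  proof (rule tendsto_le[OF _ gat[OF return_in_Delta[OF y X]] gat[OF return_in_Delta[OF x X]]])
    have "\<forall>\<^sub>F e in at_right 0. 0 < e \<and> e < (1::real)"
      using eventually_at_right_real[of 0 1] by simp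
    then show "\<forall>\<^sub>F e in at_right 0. (Cf (mix e \<mu> (return borel x)) - Cf \<mu>) / e
          \<le> (Cf (mix e \<mu> (return borel y)) - Cf \<mu>) / e"
    proof eventually_elim
      case (elim e)
      have "mix e \<mu> (return borel x) \<in> Delta X" "mix e \<mu> (return borel y) \<in> Delta X"
        using elim x y X by (auto intro!: mix_in_Delta[OF _ _ mu] return_in_Delta)
      then have "Cf (mix e \<mu> (return borel x)) \<le> Cf (mix e \<mu> (return borel y))"
        using fosd_mono fosd_mix_return[OF _ _ mu xy] elim by auto
      then show ?case using elim by (simp add: divide_right_mono)
    qed
  qed simp
  then show "c x \<le> c y" using set_integral_return(2)[OF cm] x y by simp
qed

lemma set_integrable_if_optimal:
  fixes v :: "real \<Rightarrow> real" and Cf :: "real measure \<Rightarrow> real"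
  assumes X: "X \<in> sets borel" and mu: "\<mu> \<in> Delta X"
    and vm: "(\<lambda>x. indicator X x * v x) \<in> borel_measurable borel"
    and opt: "\<And>N. N \<in> Delta X \<Longrightarrow> ext_int X N v - ereal (Cf N) \<le> ext_int X \<mu> v - ereal (Cf \<mu>)"
  shows "set_integrable \<mu> X v"
proof (rule ccontr)
  obtain x where x: "x \<in> X" using Delta_nonempty_set[OF mu] by blast
  assume "\<not> set_integrable \<mu> X v"
  then show False
    using opt[OF return_in_Delta[OF x X]] ext_int_return[OF vm x] by (simp add: ext_int_def)
qed

lemma optimal_utility_le_marginal_cost:
  fixes v c :: "real \<Rightarrow> real" and Cf :: "real measure \<Rightarrow> real"
  assumes X: "X \<in> sets borel" and mu: "\<mu> \<in> Delta X"
    and vm: "(\<lambda>x. indicator X x * v x) \<in> borel_measurable borel" and c: "continuous_on X c"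
    and opt: "\<And>N. N \<in> Delta X \<Longrightarrow> ext_int X N v - ereal (Cf N) \<le> ext_int X \<mu> v - ereal (Cf \<mu>)"
    and gat: "\<And>N. N \<in> Delta X \<Longrightarrow> ((\<lambda>\<epsilon>. (Cf (mix \<epsilon> \<mu> N) - Cf \<mu>) / \<epsilon>)
                  \<longlongrightarrow> (LINT x:X|N. c x) - (LINT x:X|\<mu>. c x)) (at_right 0)"
    and y: "y \<in> X"
  shows "v y - (LINT x:X|\<mu>. v x) \<le> c y - (LINT x:X|\<mu>. c x)"
proof -
  define A where "A = (LINT x:X|\<mu>. v x)"
  have vint: "set_integrable \<mu> X v" using set_integrable_if_optimal[OF X mu vm opt] .
  have "v y - A \<le> (Cf (mix e \<mu> (return borel y)) - Cf \<mu>) / e" if e: "0 < e" "e < 1" for e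
  proof -
    have mD: "mix e \<mu> (return borel y) \<in> Delta X"
      using e by (intro mix_in_Delta[OF _ _ mu return_in_Delta[OF y X] X]) auto
    have "has_bochner_integral (mix e \<mu> (return borel y)) (\<lambda>x. indicator X x * v x) ((1 - e) * A + e * v y)"
      using has_bochner_integral_mix[of e \<mu> "return borel y" "\<lambda>x. indicator X x * v x"]
        e DeltaD(1)[OF mu] vint set_integral_return[OF vm y]
      by (simp add: set_integrable_def A_def set_lebesgue_integral_def)
    then have "ext_int X (mix e \<mu> (return borel y)) v = ereal ((1 - e) * A + e * v y)"
      by (simp add: has_bochner_integral_iff ext_int_def set_integrable_def set_lebesgue_integral_def)
    then have "(1 - e) * A + e * v y - Cf (mix e \<mu> (return borel y)) \<le> A - Cf \<mu>"
      using opt[OF mD] vint by (simp add: ext_int_def A_def)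
    then show ?thesis using e by (simp add: field_simps)
  qed
  then have "v y - A \<le> (LINT x:X|return borel y. c x) - (LINT x:X|\<mu>. c x)"
    using eventually_at_right_real[of 0 1]
    by (intro tendsto_lowerbound[OF gat[OF return_in_Delta[OF y X]]])
      (auto elim!: eventually_mono)
  then show ?thesis
    using set_integral_return(2)[of X c y] borel_measurable_continuous_on_indicator[OF X c] y
    by (simp add: A_def)
qed

lemma first_order_condition:
  fixes v c :: "real \<Rightarrow> real" and Cf :: "real measure \<Rightarrow> real"
  assumes X: "compact X" and mu: "\<mu> \<in> Delta X"
    and vm: "(\<lambda>x. indicator X x * v x) \<in> borel_measurable borel" and c: "continuous_on X c"
    and opt: "\<And>N. N \<in> Delta X \<Longrightarrow> ext_int X N v - ereal (Cf N) \<le> ext_int X \<mu> v - ereal (Cf \<mu>)"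
    and gat: "\<And>N. N \<in> Delta X \<Longrightarrow> ((\<lambda>\<epsilon>. (Cf (mix \<epsilon> \<mu> N) - Cf \<mu>) / \<epsilon>)
                  \<longlongrightarrow> (LINT x:X|N. c x) - (LINT x:X|\<mu>. c x)) (at_right 0)"
  shows "\<exists>K. (\<forall>x\<in>X. v x \<le> c x + K) \<and> (AE x in \<mu>. x \<in> X \<longrightarrow> v x = c x + K)"
proof -
  interpret prob_space \<mu> using DeltaD[OF mu] by simp
  have Xb: "X \<in> sets borel" using X by (simp add: compact_imp_closed borel_closed)
  have Xm: "X \<in> sets \<mu>" and mX: "measure \<mu> X = 1"
    using Xb DeltaD[OF mu] by (auto simp: emeasure_eq_measure)
  have iX: "integrable \<mu> (indicat_real X)"
    using Xm by (simp add: integrable_real_indicator emeasure_eq_measure)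
  define K where "K = (LINT x:X|\<mu>. v x) - (LINT x:X|\<mu>. c x)"
  have le: "\<forall>x\<in>X. v x \<le> c x + K"
  proof
    fix x assume "x \<in> X"
    from optimal_utility_le_marginal_cost[OF Xb mu vm c opt gat this]
    show "v x \<le> c x + K" by (simp add: K_def)
  qed
  have vint: "set_integrable \<mu> X v" using set_integrable_if_optimal[OF Xb mu vm opt] .
  have cint: "set_integrable \<mu> X (\<lambda>x. c x + K)"
    using set_integrable_continuous_on_compact[OF X mu c] iX
    by (intro set_integral_add) (auto simp: set_integrable_def)
  have "(LINT x:X|\<mu>. c x + K) = (LINT x:X|\<mu>. v x)"
    using set_integrable_continuous_on_compact[OF X mu c] iX Xm mX
    by (simp add: set_integral_add set_integral_const K_def set_integrable_def)
  then have "AE x in \<mu>. indicator X x * v x = indicator X x * (c x + K)"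
    using vint cint le unfolding set_integrable_def set_lebesgue_integral_def
    by (intro integral_eq_mono_AE_eq_AE) (auto simp: indicator_def)
  then have "AE x in \<mu>. x \<in> X \<longrightarrow> v x = c x + K"
    by eventually_elim (auto simp: indicator_def)
  with le show ?thesis by blast
qed

section \<open>The non-decreasing right-continuous envelope\<close>

text \<open>For \<open>a = Min X\<close>, \<open>mono_envelope X a w\<close> is the least non-decreasing right-continuous
  majorant of \<open>w\<close> on \<open>X\<close>; the \<open>max z a\<close> only keeps the supremum away from the empty set.\<close>

definition sup_upto :: "real set \<Rightarrow> real \<Rightarrow> (real \<Rightarrow> real) \<Rightarrow> real \<Rightarrow> real" where
  "sup_upto X a w z = Sup (w ` {y\<in>X. y \<le> max z a})"

definition mono_envelope :: "real set \<Rightarrow> real \<Rightarrow> (real \<Rightarrow> real) \<Rightarrow> real \<Rightarrow> real" where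
  "mono_envelope X a w x = Inf (sup_upto X a w ` {x<..})"

locale bounded_wage =
  fixes X :: "real set" and a B :: real and w :: "real \<Rightarrow> real"
  assumes min_in_X: "a \<in> X" and min_le: "\<And>y. y \<in> X \<Longrightarrow> a \<le> y"
    and wage_le: "\<And>y. y \<in> X \<Longrightarrow> w y \<le> B"
begin

abbreviation "F \<equiv> sup_upto X a w"
abbreviation "W \<equiv> mono_envelope X a w"

lemma wages_upto_nonempty: "w ` {y\<in>X. y \<le> max z a} \<noteq> {}"
  using min_in_X by auto

lemma wages_upto_bdd_above: "bdd_above (w ` {y\<in>X. y \<le> max z a})"
  using wage_le by (auto intro!: bdd_aboveI)

lemma sup_upto_ge: "y \<in> X \<Longrightarrow> y \<le> max z a \<Longrightarrow> w y \<le> F z"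
  unfolding sup_upto_def using wages_upto_bdd_above by (intro cSup_upper) auto

lemma sup_upto_le: "F z \<le> B"
  unfolding sup_upto_def using wages_upto_nonempty wage_le by (intro cSup_least) auto

lemma sup_upto_approx:
  assumes "0 < d"
  shows "\<exists>y\<in>X. y \<le> max z a \<and> F z - d < w y"
proof -
  have "F z - d < Sup (w ` {y\<in>X. y \<le> max z a})" using assms by (simp add: sup_upto_def)
  then show ?thesis
    using less_cSup_iff[OF wages_upto_nonempty wages_upto_bdd_above] by auto
qed

lemma sup_upto_comp:
  fixes u :: "real \<Rightarrow> real"
  assumes "mono u" "continuous_on UNIV u"
  shows "u (F z) = (SUP s\<in>w ` {y\<in>X. y \<le> max z a}. u s)"
  unfolding sup_upto_def
proof (rule continuous_at_Sup_mono[OF assms(1) _ wages_upto_nonempty wages_upto_bdd_above])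
  show "continuous (at_left (Sup (w ` {y\<in>X. y \<le> max z a}))) u"
    using assms(2) by (simp add: continuous_on_eq_continuous_at continuous_at_imp_continuous_within)
qed

lemma mono_envelope_le_sup_upto: "x < z \<Longrightarrow> W x \<le> F z"
  unfolding mono_envelope_def using sup_upto_ge[OF min_in_X]
  by (intro cInf_lower) (auto intro!: bdd_belowI)

lemma mono_envelope_ge_min: "w a \<le> W x"
  unfolding mono_envelope_def using sup_upto_ge[OF min_in_X]
  by (intro cInf_greatest) (auto intro: gt_ex)

lemma mono_envelope_le: "W x \<le> B"
  using mono_envelope_le_sup_upto[of x "x + 1"] sup_upto_le[of "x + 1"] by simp

lemma mono_envelope_ge: "x \<in> X \<Longrightarrow> w x \<le> W x"
  unfolding mono_envelope_def by (intro cInf_greatest) (auto intro: gt_ex sup_upto_ge)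

lemma mono_envelope_mono: "mono W"
proof (rule monoI)
  fix x x' :: real assume "x \<le> x'"
  then show "W x \<le> W x'"
    unfolding mono_envelope_def[of X a w x']
    by (intro cInf_greatest) (auto intro: gt_ex mono_envelope_le_sup_upto)
qed

lemma mono_envelope_right_continuous: "continuous (at x within {x..}) W"
  unfolding continuous_within
proof (rule order_tendstoI)
  fix l assume "l < W x"
  then show "\<forall>\<^sub>F y in at x within {x..}. l < W y"
    using mono_envelope_mono
    by (auto simp: eventually_at_filter mono_def intro: less_le_trans always_eventually)
next
  fix h assume "W x < h"
  then obtain z where z: "x < z" "F z < h"
    using cInf_lessD[of "F ` {x<..}" h] by (auto simp: mono_envelope_def intro: gt_ex)
  show "\<forall>\<^sub>F y in at x within {x..}. W y < h"
    unfolding eventually_at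
  proof (intro exI[of _ "z - x"] conjI ballI impI)
    show "0 < z - x" using z by simp
    fix y assume "y \<in> {x..}" "y \<noteq> x \<and> dist y x < z - x"
    then have "y < z" by (auto simp: dist_real_def)
    then show "W y < h" using mono_envelope_le_sup_upto[of y z] z by simp
  qed
qed

text \<open>If \<open>u \<circ> w\<close> stays below a continuous non-decreasing \<open>g\<close> and touches it at \<open>x\<close>, then
  the envelope cannot exceed \<open>w x\<close>: just to the right of \<open>x\<close> all of \<open>u \<circ> w\<close> is below
  \<open>g x + \<eta>/2\<close> by continuity, and to the left by monotonicity of \<open>g\<close>.\<close>

lemma mono_envelope_le_at_contact:
  fixes u g :: "real \<Rightarrow> real"
  assumes u_mono: "strict_mono u" and u_cont: "continuous_on UNIV u"
    and g_cont: "continuous_on X g" and g_mono: "mono_on X g"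
    and ug: "\<And>y. y \<in> X \<Longrightarrow> u (w y) \<le> g y"
    and x: "x \<in> X" and contact: "u (w x) = g x"
  shows "W x \<le> w x"
proof (rule ccontr)
  assume "\<not> W x \<le> w x"
  then have "u (w x) < u (W x)" using u_mono by (simp add: strict_mono_less)
  define \<eta> where "\<eta> = u (W x) - g x"
  have eta: "0 < \<eta>" using \<open>u (w x) < u (W x)\<close> contact by (simp add: \<eta>_def)
  obtain d where d: "0 < d" and dd: "\<And>y. y \<in> X \<Longrightarrow> dist y x < d \<Longrightarrow> dist (g y) (g x) < \<eta> / 2"
    using g_cont x eta unfolding continuous_on_iff by (metis half_gt_zero)
  define z where "z = x + d / 2"
  have xz: "x < z" using d by (simp add: z_def)
  have gy: "u (w y) \<le> g x + \<eta> / 2" if y: "y \<in> X" "y \<le> max z a" for y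
  proof (cases "y \<le> x")
    case True
    then show ?thesis using mono_onD[OF g_mono y(1) x] ug[OF y(1)] eta by force
  next
    case False
    then have "dist y x < d" using y min_le[OF x] xz d by (simp add: z_def dist_real_def)
    then have "\<bar>g y - g x\<bar> < \<eta> / 2" using dd[OF y(1)] by (simp add: dist_real_def)
    with ug[OF y(1)] show ?thesis by linarith
  qed
  have umono: "mono u" using u_mono strict_mono_mono by blast
  have "u (W x) \<le> u (F z)" using mono_envelope_le_sup_upto[OF xz] umono by (simp add: monoD)
  also have "\<dots> \<le> g x + \<eta> / 2"
    unfolding sup_upto_comp[OF umono u_cont] using wages_upto_nonempty gy by (intro cSUP_least) auto
  finally show False using eta \<eta>_def by linarith
qed

end

section \<open>Deviations under the envelope wage\<close>

text \<open>A deviation \<open>N\<close> under the envelope wage is compared with the pushforwards of \<open>N\<close>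
  along \<open>S n\<close>: these earn nearly the envelope wage under \<open>w\<close>, and cost at most as much as the
  pushforwards along \<open>R n\<close>, which converge to \<open>N\<close>.\<close>

definition envelope_approx ::
    "real set \<Rightarrow> real \<Rightarrow> (real \<Rightarrow> real) \<Rightarrow> (nat \<Rightarrow> real \<Rightarrow> real) \<Rightarrow> (nat \<Rightarrow> real \<Rightarrow> real) \<Rightarrow> bool"
  where
  "envelope_approx X a w S R \<longleftrightarrow>
     (\<forall>n. S n \<in> borel_measurable borel) \<and> (\<forall>n. R n \<in> borel_measurable borel)
     \<and> (\<forall>n x. x \<notin> X \<longrightarrow> S n x = x) \<and> (\<forall>n x. x \<notin> X \<longrightarrow> R n x = x)
     \<and> (\<forall>n. \<forall>x\<in>X. S n x \<in> X) \<and> (\<forall>n. \<forall>x\<in>X. R n x \<in> X) \<and> (\<forall>n x. S n x \<le> R n x)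
     \<and> (\<forall>x\<in>X. (\<lambda>n. R n x) \<longlonglongrightarrow> x)
     \<and> (\<forall>n. \<forall>x\<in>X. mono_envelope X a w x - 1 / Suc n \<le> w (S n x))"

lemma next_grid_point:
  fixes x :: real
  shows "x < (of_int \<lfloor>x * Suc n\<rfloor> + 1) / Suc n"
    and "(of_int \<lfloor>x * Suc n\<rfloor> + 1) / Suc n \<le> x + 1 / Suc n"
proof -
  have "x * Suc n < of_int \<lfloor>x * Suc n\<rfloor> + 1" by linarith
  then show "x < (of_int \<lfloor>x * Suc n\<rfloor> + 1) / Suc n" by (simp add: field_simps)
  have "of_int \<lfloor>x * Suc n\<rfloor> + 1 \<le> x * Suc n + 1" by linarith
  then have "(of_int \<lfloor>x * Suc n\<rfloor> + 1) / Suc n \<le> (x * Suc n + 1) / Suc n"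
    by (rule divide_right_mono) simp
  also have "(x * Suc n + 1) / Suc n = x + 1 / Suc n"
    by (simp add: add_divide_distrib del: of_nat_Suc)
  finally show "(of_int \<lfloor>x * Suc n\<rfloor> + 1) / Suc n \<le> x + 1 / Suc n" .
qed

lemma borel_measurable_grid_select:
  fixes f :: "int \<Rightarrow> real" and X :: "real set"
  assumes [measurable]: "X \<in> sets borel"
  shows "(\<lambda>x. if x \<in> X then f \<lfloor>x * real (Suc n)\<rfloor> else x) \<in> borel_measurable borel"
proof (rule measurable_compose_countable'[where I=UNIV and f="\<lambda>k x. if x \<in> X then f k else x"
      and g="\<lambda>x::real. \<lfloor>x * real (Suc n)\<rfloor>"])
  show "(\<lambda>x. if x \<in> X then f i else x) \<in> borel_measurable borel" for i by measurable
  show "(\<lambda>x::real. \<lfloor>x * real (Suc n)\<rfloor>) \<in> borel \<rightarrow>\<^sub>M count_space UNIV" by measurable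
qed simp

lemma finite_points_separated:
  fixes X :: "real set"
  assumes X: "finite X"
  shows "\<exists>d>0. \<forall>x\<in>X. \<forall>y\<in>X. x < y \<longrightarrow> x + d < y"
proof -
  define G where "G = {y - x | x y. x \<in> X \<and> y \<in> X \<and> x < y}"
  have "G \<subseteq> (\<lambda>(x, y). y - x) ` (X \<times> X)" by (auto simp: G_def)
  then have Gfin: "finite G" using X finite_subset by blast
  have pos: "0 < Min (insert 1 G)" using Gfin by (auto simp: G_def)
  have "x + Min (insert 1 G) / 2 < y" if "x \<in> X" "y \<in> X" "x < y" for x y
  proof -
    have "y - x \<in> G" using that by (auto simp: G_def)
    then have "Min (insert 1 G) \<le> y - x" using Gfin by simp
    then show ?thesis using pos by linarith
  qed
  then show ?thesis using pos by (intro exI[of _ "Min (insert 1 G) / 2"]) auto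
qed

context bounded_wage
begin

lemma envelope_approx_interval:
  assumes X: "X = {a..b}"
  shows "\<exists>S R. envelope_approx X a w S R"
proof -
  define q where "q n k = (real_of_int k + 1) / Suc n" for n :: nat and k :: int
  define sel where
    "sel n k = (SOME y. y \<in> X \<and> y \<le> max (q n k) a \<and> F (q n k) - 1 / Suc n < w y)" for n k
  have sel: "sel n k \<in> X \<and> sel n k \<le> max (q n k) a \<and> F (q n k) - 1 / Suc n < w (sel n k)" for n k
    unfolding sel_def by (rule someI_ex) (use sup_upto_approx[of "1 / Suc n" "q n k"] in auto)
  \<comment> \<open>Selecting per grid cell rather than per point keeps \<open>S n\<close> measurable.\<close>
  define S where "S n x = (if x \<in> X then sel n \<lfloor>x * Suc n\<rfloor> else x)" for n x
  define R where "R n x = (if x \<in> X then min (q n \<lfloor>x * Suc n\<rfloor>) b else x)" for n x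
  have qgt: "x < q n \<lfloor>x * Suc n\<rfloor>" and qle: "q n \<lfloor>x * Suc n\<rfloor> \<le> x + 1 / Suc n"
    for n :: nat and x :: real
    unfolding q_def by (rule next_grid_point)+
  have Xb[measurable]: "X \<in> sets borel" using X by simp
  have Sm: "S n \<in> borel_measurable borel" for n
    unfolding S_def[abs_def] using Xb by (rule borel_measurable_grid_select)
  have Rm: "R n \<in> borel_measurable borel" for n
    unfolding R_def[abs_def] q_def by measurable
  have "envelope_approx X a w S R"
    unfolding envelope_approx_def
  proof (intro conjI allI ballI impI)
    fix n show "S n \<in> borel_measurable borel" by (rule Sm)
  next
    fix n show "R n \<in> borel_measurable borel" by (rule Rm)
  next
    fix n x assume "x \<notin> X" then show "S n x = x" by (simp add: S_def)
  next
    fix n x assume "x \<notin> X" then show "R n x = x" by (simp add: R_def)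
  next
    fix n x assume "x \<in> X" then show "S n x \<in> X" using sel by (simp add: S_def)
  next
    fix n x assume x: "x \<in> X"
    have "x < q n \<lfloor>x * Suc n\<rfloor>" by (rule qgt)
    then show "R n x \<in> X" using x X by (auto simp: R_def)
  next
    fix n x show "S n x \<le> R n x"
    proof (cases "x \<in> X")
      case True
      have "x < q n \<lfloor>x * Suc n\<rfloor>" by (rule qgt)
      then have "max (q n \<lfloor>x * Suc n\<rfloor>) a = q n \<lfloor>x * Suc n\<rfloor>" using True X by auto
      then show ?thesis using True sel[of n "\<lfloor>x * Suc n\<rfloor>"] X by (auto simp: S_def R_def)
    qed (simp add: S_def R_def)
  next
    fix x assume x: "x \<in> X"
    show "(\<lambda>n. R n x) \<longlonglongrightarrow> x"
    proof (rule tendsto_sandwich[where f="\<lambda>n. x" and h="\<lambda>n. x + 1 / Suc n"])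
      show "\<forall>\<^sub>F n in sequentially. x \<le> R n x" using qgt x X by (auto simp: R_def less_imp_le)
      show "\<forall>\<^sub>F n in sequentially. R n x \<le> x + 1 / real (Suc n)"
        using qle x by (intro always_eventually allI) (simp add: R_def min.coboundedI1 del: of_nat_Suc)
      have "(\<lambda>n. x + 1 / real (Suc n)) \<longlonglongrightarrow> x + 0"
        by (intro tendsto_add tendsto_const LIMSEQ_Suc[OF lim_1_over_n])
      then show "(\<lambda>n. x + 1 / real (Suc n)) \<longlonglongrightarrow> x" by simp
    qed simp
  next
    fix n x assume x: "x \<in> X"
    have "W x \<le> F (q n \<lfloor>x * Suc n\<rfloor>)" by (rule mono_envelope_le_sup_upto[OF qgt])
    then show "mono_envelope X a w x - 1 / Suc n \<le> w (S n x)"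
      using sel[of n "\<lfloor>x * Suc n\<rfloor>"] x by (simp add: S_def)
  qed
  then show ?thesis by blast
qed

lemma envelope_approx_finite:
  assumes X: "finite X"
  shows "\<exists>S R. envelope_approx X a w S R"
proof -
  obtain d where dpos: "0 < d" and gap: "\<And>x y. x \<in> X \<Longrightarrow> y \<in> X \<Longrightarrow> x < y \<Longrightarrow> x + d < y"
    using finite_points_separated[OF X] by blast
  define sel where
    "sel n x = (SOME y. y \<in> X \<and> y \<le> max (x + d) a \<and> F (x + d) - 1 / Suc n < w y)" for n x
  have sel: "sel n x \<in> X \<and> sel n x \<le> max (x + d) a \<and> F (x + d) - 1 / Suc n < w (sel n x)" for n x
    unfolding sel_def by (rule someI_ex) (use sup_upto_approx[of "1 / Suc n" "x + d"] in auto)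
  have selx: "sel n x \<le> x" if x: "x \<in> X" for n x
  proof (rule ccontr)
    assume "\<not> sel n x \<le> x"
    then have "x + d < sel n x" using gap[OF x] sel[of n x] by auto
    moreover have "max (x + d) a = x + d" using min_le[OF x] dpos by auto
    ultimately show False using sel[of n x] by auto
  qed
  define S where "S n x = (if x \<in> X then sel n x else x)" for n x
  \<comment> \<open>No point of \<open>X\<close> lies in \<open>{x<..x + d}\<close>, so \<open>S n x \<le> x\<close> and \<open>R n\<close> can be the identity.\<close>
  define R where "R n x = x" for n :: nat and x :: real
  have Sm: "S n \<in> borel_measurable borel" for n
  proof (rule measurable_discrete_difference[where f="\<lambda>x. x" and X=X])
    show "countable X" using X by (rule countable_finite)
  qed (auto simp: S_def)
  have "envelope_approx X a w S R"
    unfolding envelope_approx_def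
  proof (intro conjI allI ballI impI)
    fix n x assume x: "x \<in> X"
    have "W x \<le> F (x + d)" using mono_envelope_le_sup_upto dpos by simp
    then show "mono_envelope X a w x - 1 / Suc n \<le> w (S n x)"
      using sel[of n x] x by (simp add: S_def)
  qed (use Sm sel selx in \<open>auto simp: S_def R_def[abs_def]\<close>)
  then show ?thesis by blast
qed

end

lemma integral_bounded_convergence:
  fixes f :: "real \<Rightarrow> real" and s :: "nat \<Rightarrow> real \<Rightarrow> real"
  assumes N: "prob_space N" "sets N = sets borel"
    and fm: "f \<in> borel_measurable borel" and sm: "\<And>i. s i \<in> borel_measurable borel"
    and bd: "\<And>i x. \<bar>s i x\<bar> \<le> K" and lim: "\<And>x. (\<lambda>i. s i x) \<longlonglongrightarrow> f x"
  shows "(\<lambda>i. integral\<^sup>L N (s i)) \<longlonglongrightarrow> integral\<^sup>L N f"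
proof -
  interpret prob_space N by fact
  show ?thesis
  proof (rule integral_dominated_convergence[where w="\<lambda>_. K"])
    show "f \<in> borel_measurable N" "s i \<in> borel_measurable N" for i
      using borel_measurable_sets_eq[OF N(2)] fm sm by auto
  qed (use bd lim in simp_all)
qed

lemma indicator_invariant:
  assumes "\<And>x. x \<in> X \<Longrightarrow> T x \<in> X" and "\<And>x. x \<notin> X \<Longrightarrow> T x = x"
  shows "indicator X (T x) = (indicator X x :: real)"
  using assms by (cases "x \<in> X") (auto simp: indicator_def)

lemma set_integral_distr_invariant:
  fixes f T :: "real \<Rightarrow> real"
  assumes N: "sets N = sets borel" and X: "X \<in> sets borel"
    and T: "T \<in> borel_measurable borel" and TX: "\<And>x. x \<in> X \<Longrightarrow> T x \<in> X"
    and Tout: "\<And>x. x \<notin> X \<Longrightarrow> T x = x"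
    and f: "(\<lambda>x. indicator X x * f x) \<in> borel_measurable borel"
  shows "set_integrable (distr N borel T) X f \<longleftrightarrow> integrable N (\<lambda>x. indicator X x * f (T x))"
    and "(LINT x:X|distr N borel T. f x) = integral\<^sup>L N (\<lambda>x. indicator X x * f (T x))"
proof -
  have T': "T \<in> measurable N borel" using borel_measurable_sets_eq[OF N T] .
  have eq: "(\<lambda>x. indicator X (T x) * f (T x)) = (\<lambda>x. indicator X x * f (T x))"
    using indicator_invariant[of X T] TX Tout by auto
  show "set_integrable (distr N borel T) X f \<longleftrightarrow> integrable N (\<lambda>x. indicator X x * f (T x))"
    unfolding set_integrable_def using integrable_distr_eq[OF T' f] eq by simp
  show "(LINT x:X|distr N borel T. f x) = integral\<^sup>L N (\<lambda>x. indicator X x * f (T x))"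
    unfolding set_lebesgue_integral_def using integral_distr[OF T' f] eq by simp
qed

lemma weak_conv_on_distr:
  fixes R :: "nat \<Rightarrow> real \<Rightarrow> real"
  assumes X: "compact X" and N: "N \<in> Delta X"
    and Rm: "\<And>n. R n \<in> borel_measurable borel" and RX: "\<And>n x. x \<in> X \<Longrightarrow> R n x \<in> X"
    and Rout: "\<And>n x. x \<notin> X \<Longrightarrow> R n x = x" and Rlim: "\<And>x. x \<in> X \<Longrightarrow> (\<lambda>n. R n x) \<longlonglongrightarrow> x"
  shows "weak_conv_on X (\<lambda>n. distr N borel (R n)) N"
  unfolding weak_conv_on_def
proof (intro allI impI)
  fix \<phi> :: "real \<Rightarrow> real" assume phi: "continuous_on X \<phi>"
  have Xb[measurable]: "X \<in> sets borel" using X by (simp add: compact_imp_closed borel_closed)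
  obtain K where K: "\<And>y. y \<in> X \<Longrightarrow> \<bar>\<phi> y\<bar> \<le> K" using continuous_on_compact_bounded[OF X phi] by blast
  have pm[measurable]: "(\<lambda>x. indicator X x * \<phi> x) \<in> borel_measurable borel"
    using borel_measurable_continuous_on_indicator[OF Xb phi] by simp
  have [measurable]: "R n \<in> borel_measurable borel" for n by (rule Rm)
  have "(\<lambda>n. integral\<^sup>L N (\<lambda>x. indicator X x * \<phi> (R n x))) \<longlonglongrightarrow> integral\<^sup>L N (\<lambda>x. indicator X x * \<phi> x)"
  proof (rule integral_bounded_convergence[OF DeltaD(2,1)[OF N] pm])
    show "(\<lambda>x. indicator X x * \<phi> (R n x)) \<in> borel_measurable borel" for n
    proof -
      have "(\<lambda>x. indicator X (R n x) * \<phi> (R n x)) \<in> borel_measurable borel" by measurable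
      then show ?thesis using indicator_invariant[of X "R n", OF RX Rout] by simp
    qed
    obtain x0 where "x0 \<in> X" using Delta_nonempty_set[OF N] by blast
    then show "\<bar>indicator X x * \<phi> (R n x)\<bar> \<le> K" for n x
      using K RX by (cases "x \<in> X") (auto simp: indicator_def intro: order_trans[OF abs_ge_zero])
    show "(\<lambda>n. indicator X x * \<phi> (R n x)) \<longlonglongrightarrow> indicator X x * \<phi> x" for x
    proof (cases "x \<in> X")
      case True
      then have "(\<lambda>n. \<phi> (R n x)) \<longlonglongrightarrow> \<phi> x"
        using RX by (intro continuous_on_tendsto_compose[OF phi Rlim]) auto
      then show ?thesis by (intro tendsto_mult tendsto_const)
    qed simp
  qed
  then show "(\<lambda>n. LINT x:X|distr N borel (R n). \<phi> x) \<longlonglongrightarrow> (LINT x:X|N. \<phi> x)"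
    using set_integral_distr_invariant(2)[OF DeltaD(1)[OF N] Xb Rm RX Rout pm]
    by (simp add: set_lebesgue_integral_def)
qed

lemma borel_measurable_indicator_mult_comp:
  fixes w u :: "real \<Rightarrow> real"
  assumes X[measurable]: "X \<in> sets borel"
    and wm[measurable]: "(\<lambda>x. indicator X x * w x) \<in> borel_measurable borel"
    and u: "continuous_on UNIV u"
  shows "(\<lambda>x. indicator X x * u (w x)) \<in> borel_measurable borel"
proof -
  have [measurable]: "u \<in> borel_measurable borel" using u by (rule borel_measurable_continuous_onI)
  have "(\<lambda>x. indicator X x * u (indicator X x * w x)) \<in> borel_measurable borel" by measurable
  moreover have "(\<lambda>x. indicator X x * u (indicator X x * w x)) = (\<lambda>x. indicator X x * u (w x))"
    by (auto simp: fun_eq_iff indicator_def)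
  ultimately show ?thesis by simp
qed

context bounded_wage
begin

lemma ext_int_envelope_deviation_le:
  fixes Cf :: "real measure \<Rightarrow> real" and u :: "real \<Rightarrow> real" and U :: ereal
  assumes X: "compact X" and N: "N \<in> Delta X"
    and Cf_cont: "\<And>Ms M. (\<forall>n. Ms n \<in> Delta X) \<Longrightarrow> M \<in> Delta X \<Longrightarrow> weak_conv_on X Ms M
                    \<Longrightarrow> (\<lambda>n. Cf (Ms n)) \<longlonglongrightarrow> Cf M"
    and Cf_fosd: "\<And>M M'. M \<in> Delta X \<Longrightarrow> M' \<in> Delta X \<Longrightarrow> fosd M' M \<Longrightarrow> Cf M \<le> Cf M'"
    and w_deviation_le: "\<And>M. M \<in> Delta X \<Longrightarrow> ext_int X M (\<lambda>x. u (w x)) - ereal (Cf M) \<le> U"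
    and wm: "(\<lambda>x. indicator X x * w x) \<in> borel_measurable borel"
    and u_cont: "continuous_on UNIV u" and u_mono: "mono u"
    and approx: "envelope_approx X a w S R"
  shows "ext_int X N (\<lambda>x. u (W x)) - ereal (Cf N) \<le> U"
proof -
  interpret N: prob_space N using DeltaD[OF N] by simp
  have sN: "sets N = sets borel" using DeltaD[OF N] by simp
  have Xb[measurable]: "X \<in> sets borel" using X by (simp add: compact_imp_closed borel_closed)
  have Sm[measurable]: "\<And>n. S n \<in> borel_measurable borel"
    and Rm[measurable]: "\<And>n. R n \<in> borel_measurable borel"
    and Sout: "\<And>n x. x \<notin> X \<Longrightarrow> S n x = x" and Rout: "\<And>n x. x \<notin> X \<Longrightarrow> R n x = x"
    and SX: "\<And>n x. x \<in> X \<Longrightarrow> S n x \<in> X" and RX: "\<And>n x. x \<in> X \<Longrightarrow> R n x \<in> X"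
    and S_le_R: "\<And>n x. S n x \<le> R n x" and Rlim: "\<And>x. x \<in> X \<Longrightarrow> (\<lambda>n. R n x) \<longlonglongrightarrow> x"
    and S_wage: "\<And>n x. x \<in> X \<Longrightarrow> W x - 1 / Suc n \<le> w (S n x)"
    using approx unfolding envelope_approx_def by blast+
  have [measurable]: "W \<in> borel_measurable borel"
    using mono_envelope_mono by (rule borel_measurable_mono)
  have [measurable]: "u \<in> borel_measurable borel"
    using u_cont by (rule borel_measurable_continuous_onI)
  have uwm: "(\<lambda>x. indicator X x * u (w x)) \<in> borel_measurable borel"
    using borel_measurable_indicator_mult_comp[OF Xb wm u_cont] .
  have uWm: "(\<lambda>x. indicator X x * u (W x)) \<in> borel_measurable borel" by measurable
  define K where "K = \<bar>u (w a - 1)\<bar> + \<bar>u B\<bar>"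
  have u_bound: "\<bar>u y\<bar> \<le> K" if "w a - 1 \<le> y" "y \<le> B" for y
    using monoD[OF u_mono that(1)] monoD[OF u_mono that(2)] unfolding K_def by linarith
  have lower: "w a - 1 \<le> W x - 1 / Suc n" for x n
  proof -
    have "1 / real (Suc n) \<le> 1" by simp
    then show ?thesis using mono_envelope_ge_min[of x] by linarith
  qed
  define g where "g n x = indicator X x * u (W x - 1 / Suc n)" for n x
  have gm[measurable]: "g n \<in> borel_measurable borel" for n unfolding g_def by measurable
  have g_bound: "\<bar>g n x\<bar> \<le> K" for n x
  proof -
    have "0 \<le> 1 / real (Suc n)" by simp
    then have "W x - 1 / Suc n \<le> B" using mono_envelope_le[of x] by linarith
    then show ?thesis using u_bound[OF lower] by (auto simp: g_def indicator_def K_def)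
  qed
  have step: "ereal (integral\<^sup>L N (g n) - Cf (distr N borel (R n))) \<le> U" for n
  proof -
    have MD: "distr N borel (S n) \<in> Delta X" using distr_in_Delta[OF N Xb Sm SX] .
    have PD: "distr N borel (R n) \<in> Delta X" using distr_in_Delta[OF N Xb Rm RX] .
    have Sw_bound: "\<bar>indicator X x * u (w (S n x))\<bar> \<le> K" for x
      using u_bound[OF order_trans[OF lower S_wage] wage_le[OF SX]] u_bound[of "w a"]
      by (cases "x \<in> X") (auto simp: K_def)
    have "(\<lambda>x. indicator X (S n x) * u (w (S n x))) \<in> borel_measurable N"
      using borel_measurable_sets_eq[OF sN measurable_compose[OF Sm uwm]] by simp
    then have intS: "integrable N (\<lambda>x. indicator X x * u (w (S n x)))"
      using indicator_invariant[of X "S n", OF SX Sout] Sw_bound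
      by (intro N.integrable_const_bound[where B=K]) auto
    have intg: "integrable N (g n)"
      using g_bound borel_measurable_sets_eq[OF sN gm] by (intro N.integrable_const_bound[where B=K]) auto
    have "integral\<^sup>L N (g n) \<le> integral\<^sup>L N (\<lambda>x. indicator X x * u (w (S n x)))"
      using S_wage u_mono by (intro integral_mono[OF intg intS]) (auto simp: g_def indicator_def monoD)
    also have "\<dots> = (LINT x:X|distr N borel (S n). u (w x))"
      using set_integral_distr_invariant(2)[OF sN Xb Sm SX Sout uwm] by simp
    finally have "ereal (integral\<^sup>L N (g n) - Cf (distr N borel (S n)))
        \<le> ext_int X (distr N borel (S n)) (\<lambda>x. u (w x)) - ereal (Cf (distr N borel (S n)))"
      using set_integral_distr_invariant(1)[OF sN Xb Sm SX Sout uwm] intS by (simp add: ext_int_def)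
    also have "\<dots> \<le> U" using w_deviation_le[OF MD] .
    finally show ?thesis
      using Cf_fosd[OF MD PD fosd_distr_mono[OF N Sm Rm S_le_R]] by (auto elim: order_trans[rotated])
  qed
  have "(\<lambda>n. integral\<^sup>L N (g n)) \<longlonglongrightarrow> integral\<^sup>L N (\<lambda>x. indicator X x * u (W x))"
  proof (rule integral_bounded_convergence[OF N.prob_space_axioms sN _ _ g_bound])
    fix x
    have "(\<lambda>n. W x - 1 / real (Suc n)) \<longlonglongrightarrow> W x - 0"
      by (intro tendsto_diff tendsto_const LIMSEQ_Suc[OF lim_1_over_n])
    then show "(\<lambda>n. g n x) \<longlonglongrightarrow> indicator X x * u (W x)"
      unfolding g_def using u_cont
      by (intro tendsto_mult tendsto_const isCont_tendsto_compose[of _ u])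
        (auto simp: continuous_on_eq_continuous_at)
  qed simp_all
  moreover have "(\<lambda>n. Cf (distr N borel (R n))) \<longlonglongrightarrow> Cf N"
    using distr_in_Delta[OF N Xb Rm RX] weak_conv_on_distr[OF X N Rm RX Rout Rlim]
    by (intro Cf_cont N) auto
  ultimately have "(\<lambda>n. ereal (integral\<^sup>L N (g n) - Cf (distr N borel (R n))))
      \<longlonglongrightarrow> ereal (integral\<^sup>L N (\<lambda>x. indicator X x * u (W x)) - Cf N)"
    by (intro tendsto_ereal tendsto_diff)
  then have "ereal (integral\<^sup>L N (\<lambda>x. indicator X x * u (W x)) - Cf N) \<le> U"
    by (rule LIMSEQ_le_const2) (use step in auto)
  moreover have "integrable N (\<lambda>x. indicator X x * u (W x))"
  proof (rule N.integrable_const_bound[where B=K])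
    have "\<bar>u (W x)\<bar> \<le> K" for x
      using u_bound mono_envelope_ge_min[of x] mono_envelope_le[of x] by simp
    then show "AE x in N. norm (indicator X x * u (W x)) \<le> K"
      by (intro AE_I2) (auto simp: indicator_def K_def)
  qed (rule borel_measurable_sets_eq[OF sN uWm])
  ultimately show ?thesis
    by (simp add: ext_int_def set_integrable_def set_lebesgue_integral_def)
qed

end

section \<open>Incentive compatibility of the envelope mechanism\<close>

lemma ext_int_cong_AE:
  fixes f g :: "real \<Rightarrow> real"
  assumes sM: "sets M = sets borel"
    and fm: "(\<lambda>x. indicator X x * f x) \<in> borel_measurable borel"
    and gm: "(\<lambda>x. indicator X x * g x) \<in> borel_measurable borel"
    and ae: "AE x in M. x \<in> X \<longrightarrow> f x = g x"
  shows "ext_int X M f = ext_int X M g"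
proof -
  have ae': "AE x in M. indicator X x * f x = indicator X x * g x"
    using ae by eventually_elim (auto simp: indicator_def)
  note fm' = borel_measurable_sets_eq[OF sM fm] and gm' = borel_measurable_sets_eq[OF sM gm]
  show ?thesis
    using integrable_cong_AE[OF fm' gm' ae'] integral_cong_AE[OF fm' gm' ae']
    by (simp add: ext_int_def set_integrable_def set_lebesgue_integral_def)
qed

lemma emeasure_neq_eq_0_if_AE:
  fixes f g :: "real \<Rightarrow> real"
  assumes X[measurable]: "X \<in> sets borel" and sM: "sets M = sets borel"
    and fm[measurable]: "f \<in> borel_measurable borel"
    and gm[measurable]: "(\<lambda>x. indicator X x * g x) \<in> borel_measurable borel"
    and ae: "AE x in M. x \<in> X \<longrightarrow> f x = g x"
  shows "emeasure M {x\<in>X. f x \<noteq> g x} = 0"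
proof -
  have "{x\<in>X. f x \<noteq> g x} = {x\<in>X. f x \<noteq> indicator X x * g x}" by auto
  also have "\<dots> \<in> sets M" unfolding sM by measurable
  finally show ?thesis
    using ae AE_iff_measurable[of "{x\<in>X. f x \<noteq> g x}" M "\<lambda>x. x \<in> X \<longrightarrow> f x = g x"]
      sets_eq_imp_space_eq[OF sM] by auto
qed

context bounded_wage
begin

lemma mono_envelope_AE_eq:
  fixes u c :: "real \<Rightarrow> real" and Cf :: "real measure \<Rightarrow> real"
  assumes X: "compact X" and mu: "\<mu> \<in> Delta X"
    and wm: "(\<lambda>x. indicator X x * w x) \<in> borel_measurable borel"
    and u_mono: "strict_mono u" and u_cont: "continuous_on UNIV u"
    and opt: "\<And>N. N \<in> Delta X \<Longrightarrow> ext_int X N (\<lambda>x. u (w x)) - ereal (Cf N)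
                  \<le> ext_int X \<mu> (\<lambda>x. u (w x)) - ereal (Cf \<mu>)"
    and c: "continuous_on X c"
    and gat: "\<And>N. N \<in> Delta X \<Longrightarrow> ((\<lambda>\<epsilon>. (Cf (mix \<epsilon> \<mu> N) - Cf \<mu>) / \<epsilon>)
                  \<longlongrightarrow> (LINT x:X|N. c x) - (LINT x:X|\<mu>. c x)) (at_right 0)"
    and Cf_fosd: "\<And>M M'. M \<in> Delta X \<Longrightarrow> M' \<in> Delta X \<Longrightarrow> fosd M' M \<Longrightarrow> Cf M \<le> Cf M'"
  shows "AE x in \<mu>. x \<in> X \<longrightarrow> W x = w x"
proof -
  have Xb: "X \<in> sets borel" using X by (simp add: compact_imp_closed borel_closed)
  have vm: "(\<lambda>x. indicator X x * u (w x)) \<in> borel_measurable borel"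
    using borel_measurable_indicator_mult_comp[OF Xb wm u_cont] .
  obtain K where le: "\<forall>x\<in>X. u (w x) \<le> c x + K" and ae: "AE x in \<mu>. x \<in> X \<longrightarrow> u (w x) = c x + K"
    using first_order_condition[OF X mu vm c opt gat] by blast
  have "continuous_on X (\<lambda>x. c x + K)" using c by (intro continuous_intros)
  moreover have "mono_on X (\<lambda>x. c x + K)"
    using mono_on_marginal_cost[OF Xb mu c gat Cf_fosd] by (auto simp: mono_on_def)
  ultimately show ?thesis
    using ae le mono_envelope_le_at_contact[OF u_mono u_cont] mono_envelope_ge
    by (auto elim!: eventually_mono intro: order.antisym)
qed

end

locale ic_mechanism =
  fixes X :: "real set" and a :: real and u :: "real \<Rightarrow> real"
    and C :: "real \<Rightarrow> real measure \<Rightarrow> real" and \<Theta> :: "real set"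
    and w :: "real \<Rightarrow> real \<Rightarrow> real" and \<mu> :: "real \<Rightarrow> real measure"
  assumes X_cases: "finite X \<or> (\<exists>a b. a \<le> b \<and> X = {a..b})"
    and min_in_X: "a \<in> X" and min_le: "\<And>y. y \<in> X \<Longrightarrow> a \<le> y"
    and u_mono: "strict_mono u" and u_cont: "continuous_on UNIV u"
    and C_cont: "\<forall>\<theta>\<in>\<Theta>. \<forall>Ms M. (\<forall>n. Ms n \<in> Delta X) \<longrightarrow> M \<in> Delta X
                    \<longrightarrow> weak_conv_on X Ms M \<longrightarrow> (\<lambda>n. C \<theta> (Ms n)) \<longlonglongrightarrow> C \<theta> M"
    and C_fosd: "\<forall>\<theta>\<in>\<Theta>. \<forall>M\<in>Delta X. \<forall>N\<in>Delta X. fosd N M \<longrightarrow> C \<theta> N \<ge> C \<theta> M"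
    and C_gateaux: "\<forall>\<theta>\<in>\<Theta>. \<forall>M\<in>Delta X. \<exists>c. continuous_on X c \<and>
                    (\<forall>N\<in>Delta X. ((\<lambda>\<epsilon>. (C \<theta> (mix \<epsilon> M N) - C \<theta> M) / \<epsilon>)
                        \<longlongrightarrow> (LINT x:X|N. c x) - (LINT x:X|M. c x)) (at_right 0))"
    and IC: "incentive_compatible X u C \<Theta> w \<mu>"
begin

lemma compact_X: "compact X"
  using X_cases by (auto intro: finite_imp_compact)

lemma sets_X: "X \<in> sets borel"
  using compact_X by (simp add: compact_imp_closed borel_closed)

lemma wage_measurable: "\<theta> \<in> \<Theta> \<Longrightarrow> (\<lambda>x. indicator X x * w \<theta> x) \<in> borel_measurable borel"
  using IC sets_X borel_measurable_restrict_space_iff[of X borel "w \<theta>"]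
  by (simp add: incentive_compatible_def mechanism_def)

lemma action_in_Delta: "\<theta> \<in> \<Theta> \<Longrightarrow> \<mu> \<theta> \<in> Delta X"
  using IC by (simp add: incentive_compatible_def mechanism_def)

lemma wage_bounded:
  assumes "\<theta> \<in> \<Theta>"
  obtains B where "bounded_wage X a B (w \<theta>)"
proof -
  have "\<exists>B. \<forall>x\<in>X. w \<theta> x \<le> B"
    using IC assms by (simp add: incentive_compatible_def mechanism_def)
  then show ?thesis
    using that min_in_X min_le by (auto simp: bounded_wage_def)
qed

lemma Util_le_truthful:
  assumes "\<theta> \<in> \<Theta>" "\<theta>' \<in> \<Theta>" "M \<in> Delta X"
  shows "Util X u C \<theta> (w \<theta>') M \<le> Util X u C \<theta> (w \<theta>) (\<mu> \<theta>)"
  using IC assms by (simp add: incentive_compatible_def)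

lemma envelope_AE_eq:
  assumes \<theta>: "\<theta> \<in> \<Theta>"
  shows "AE x in \<mu> \<theta>. x \<in> X \<longrightarrow> mono_envelope X a (w \<theta>) x = w \<theta> x"
proof -
  obtain B where "bounded_wage X a B (w \<theta>)" using wage_bounded[OF \<theta>] .
  then interpret bounded_wage X a B "w \<theta>" .
  obtain c where "continuous_on X c" and "\<forall>N\<in>Delta X. ((\<lambda>\<epsilon>. (C \<theta> (mix \<epsilon> (\<mu> \<theta>) N) - C \<theta> (\<mu> \<theta>)) / \<epsilon>)
      \<longlongrightarrow> (LINT x:X|N. c x) - (LINT x:X|\<mu> \<theta>. c x)) (at_right 0)"
    using C_gateaux \<theta> action_in_Delta[OF \<theta>] by blast
  with Util_le_truthful[OF \<theta> \<theta>] C_fosd \<theta> show ?thesis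
    by (intro mono_envelope_AE_eq[OF compact_X action_in_Delta[OF \<theta>] wage_measurable[OF \<theta>] u_mono u_cont])
      (auto simp: Util_def)
qed

lemma envelope_measurable: "\<theta> \<in> \<Theta> \<Longrightarrow> mono_envelope X a (w \<theta>) \<in> borel_measurable borel"
  by (metis wage_bounded bounded_wage.mono_envelope_mono borel_measurable_mono)

lemma Util_envelope_truthful:
  assumes \<theta>: "\<theta> \<in> \<Theta>"
  shows "Util X u C \<theta> (mono_envelope X a (w \<theta>)) (\<mu> \<theta>) = Util X u C \<theta> (w \<theta>) (\<mu> \<theta>)"
proof -
  have "(\<lambda>x. indicator X x * mono_envelope X a (w \<theta>) x) \<in> borel_measurable borel"
    using envelope_measurable[OF \<theta>] sets_X by measurable
  then show ?thesis
    unfolding Util_def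
    using borel_measurable_indicator_mult_comp[OF sets_X _ u_cont] wage_measurable[OF \<theta>]
      envelope_AE_eq[OF \<theta>] DeltaD(1)[OF action_in_Delta[OF \<theta>]]
    by (subst ext_int_cong_AE) auto
qed

lemma Util_envelope_deviation_le:
  assumes \<theta>: "\<theta> \<in> \<Theta>" and \<theta>': "\<theta>' \<in> \<Theta>" and M: "M \<in> Delta X"
  shows "Util X u C \<theta> (mono_envelope X a (w \<theta>')) M \<le> Util X u C \<theta> (w \<theta>) (\<mu> \<theta>)"
proof -
  obtain B where "bounded_wage X a B (w \<theta>')" using wage_bounded[OF \<theta>'] .
  then interpret bounded_wage X a B "w \<theta>'" .
  have "\<exists>S R. envelope_approx X a (w \<theta>') S R"
    using X_cases
  proof
    assume "\<exists>a' b. a' \<le> b \<and> X = {a'..b}"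
    then obtain a' b where X: "X = {a'..b}" by blast
    then have "a' = a" using min_in_X min_le[of a'] by auto
    with X show ?thesis using envelope_approx_interval[of b] by simp
  qed (rule envelope_approx_finite)
  then obtain S R where "envelope_approx X a (w \<theta>') S R" by blast
  then show ?thesis
    unfolding Util_def
    using Util_le_truthful[OF \<theta> \<theta>'] C_cont C_fosd \<theta> strict_mono_mono[OF u_mono]
    by (intro ext_int_envelope_deviation_le[OF compact_X M _ _ _ wage_measurable[OF \<theta>'] u_cont])
      (auto simp: Util_def)
qed

lemma incentive_compatible_envelope:
  "incentive_compatible X u C \<Theta> (\<lambda>\<theta>. mono_envelope X a (w \<theta>)) \<mu>"
  unfolding incentive_compatible_def mechanism_def
  using envelope_measurable[THEN measurable_restrict_space1] action_in_Delta
    wage_bounded[THEN bounded_wage.mono_envelope_le] Util_envelope_deviation_le Util_envelope_truthful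
  by metis

lemma envelope_mono_right_continuous:
  assumes "\<theta> \<in> \<Theta>"
  shows "mono_on X (mono_envelope X a (w \<theta>))"
    and "x \<in> X \<Longrightarrow> continuous (at x within (X \<inter> {x..})) (mono_envelope X a (w \<theta>))"
  using wage_bounded[OF assms] bounded_wage.mono_envelope_mono
    bounded_wage.mono_envelope_right_continuous continuous_within_subset
  by (metis mono_imp_mono_on, metis inf_le2)

lemma emeasure_envelope_neq:
  "\<theta> \<in> \<Theta> \<Longrightarrow> emeasure (\<mu> \<theta>) {x\<in>X. mono_envelope X a (w \<theta>) x \<noteq> w \<theta> x} = 0"
  using emeasure_neq_eq_0_if_AE[OF sets_X DeltaD(1)[OF action_in_Delta] envelope_measurable
      wage_measurable envelope_AE_eq] .

end

theorem lemma1: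
  fixes X :: "real set" and \<theta>l \<theta>h :: real
    and u :: "real \<Rightarrow> real"
    and C :: "real \<Rightarrow> real measure \<Rightarrow> real"
    and DC :: "real \<Rightarrow> real measure \<Rightarrow> real"
    and w :: "real \<Rightarrow> real \<Rightarrow> real" and \<mu> :: "real \<Rightarrow> real measure"
  assumes X: "finite X \<or> (\<exists>a b. a \<le> b \<and> X = {a..b})"
    and u_mono: "strict_mono u" and u_cont: "continuous_on UNIV u"
    and u_conc: "concave_on UNIV u"
    and C_bdd: "\<exists>B. \<forall>\<theta>\<in>{\<theta>l..\<theta>h}. \<forall>M\<in>Delta X. \<bar>C \<theta> M\<bar> \<le> B"
    and C_cont: "\<forall>\<theta>\<in>{\<theta>l..\<theta>h}. \<forall>Ms M. (\<forall>n. Ms n \<in> Delta X) \<longrightarrow> M \<in> Delta X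
                    \<longrightarrow> weak_conv_on X Ms M \<longrightarrow> (\<lambda>n. C \<theta> (Ms n)) \<longlonglongrightarrow> C \<theta> M"
    and C_convex: "\<forall>\<theta>\<in>{\<theta>l..\<theta>h}. \<forall>M\<in>Delta X. \<forall>N\<in>Delta X. \<forall>t\<in>{0..1}.
                    C \<theta> (mix t M N) \<le> (1 - t) * C \<theta> M + t * C \<theta> N"
    and C_fosd: "\<forall>\<theta>\<in>{\<theta>l..\<theta>h}. \<forall>M\<in>Delta X. \<forall>N\<in>Delta X. fosd N M \<longrightarrow> C \<theta> N \<ge> C \<theta> M"
    and C_gateaux: "\<forall>\<theta>\<in>{\<theta>l..\<theta>h}. \<forall>M\<in>Delta X. \<exists>c. continuous_on X c \<and>
                    (\<forall>N\<in>Delta X. ((\<lambda>\<epsilon>. (C \<theta> (mix \<epsilon> M N) - C \<theta> M) / \<epsilon>)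
                        \<longlongrightarrow> (LINT x:X|N. c x) - (LINT x:X|M. c x)) (at_right 0))"
    and C_decr: "\<forall>M\<in>Delta X. strict_antimono_on {\<theta>l..\<theta>h} (\<lambda>\<theta>. C \<theta> M)"
    and C_deriv: "\<forall>M\<in>Delta X. \<forall>\<theta>\<in>{\<theta>l..\<theta>h}.
                    ((\<lambda>t. C t M) has_real_derivative DC \<theta> M) (at \<theta> within {\<theta>l..\<theta>h})"
    and DC_cont: "\<forall>M\<in>Delta X. continuous_on {\<theta>l..\<theta>h} (\<lambda>\<theta>. DC \<theta> M)"
    and DC_bdd: "\<forall>\<theta>\<in>{\<theta>l..\<theta>h}. \<exists>B. \<forall>M\<in>Delta X. \<bar>DC \<theta> M\<bar> \<le> B"
    and IC: "incentive_compatible X u C {\<theta>l..\<theta>h} w \<mu>"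
  shows "\<exists>wb :: real \<Rightarrow> real \<Rightarrow> real.
           (\<forall>\<theta>\<in>{\<theta>l..\<theta>h}. mono_on X (wb \<theta>)
              \<and> (\<forall>x\<in>X. continuous (at x within (X \<inter> {x..})) (wb \<theta>)))
         \<and> incentive_compatible X u C {\<theta>l..\<theta>h} wb \<mu>
         \<and> (\<forall>\<theta>\<in>{\<theta>l..\<theta>h}. emeasure (\<mu> \<theta>) {x\<in>X. wb \<theta> x \<noteq> w \<theta> x} = 0)"
proof (cases "X = {}")
  case True
  then show ?thesis using IC by (intro exI[of _ w]) (auto simp: mono_on_def)
next
  case False
  obtain a where "a \<in> X" "\<And>y. y \<in> X \<Longrightarrow> a \<le> y"
    using compact_attains_inf[OF _ False] X by (auto intro: finite_imp_compact)
  then interpret ic_mechanism X a u C "{\<theta>l..\<theta>h}" w \<mu>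
    using X u_mono u_cont C_cont C_fosd C_gateaux IC by unfold_locales auto
  show ?thesis
    using envelope_mono_right_continuous incentive_compatible_envelope emeasure_envelope_neq
    by (intro exI[of _ "\<lambda>\<theta>. mono_envelope X a (w \<theta>)"]) blast
qed

end
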